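(* Let $\mathbb{K}$ be a field and $\alpha_1,\dots,\alpha_n\in\mathbb{K}^*$. If $n$ is even, then $X_{\mathbb{A}_n}(\alpha_1,\dots,\alpha_n)\simeq X_{\mathbb{A}_n}(1,1,\dots,1)$. If $n$ is odd, then $X_{\mathbb{A}_n}(\alpha_1,\dots,\alpha_n)\simeq X_{\mathbb{A}_n}(\alpha,1,\dots,1)$ for some $\alpha\in\mathbb{K}^*$ depending only on the $\alpha_i$ with $i$ odd.
   Context: $X_{\mathbb{A}_n}(\alpha_1,\dots,\alpha_n)$ is the affine variety over $\mathbb{K}$ in the variables $x_1,\dots,x_n,x'_1,\dots,x'_n$ defined by $x_1x'_1=1+\alpha_1x_2$, $x_ix'_i=1+\alpha_i x_{i-1}x_{i+1}$ for $2\le i\le n-1$, and $x_nx'_n=1+\alpha_nx_{n-1}$ (for $n=1$: $x_1x'_1=1+\alpha_1$). *)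

theory Defs
  imports Main "HOL-Library.Poly_Mapping"
begin

(* Multivariate polynomials over 'k in variables indexed by nat:
  a monomial is a finitely supported exponent vector (nat =>0 nat),
  a polynomial a finitely supported coefficient function on monomials.*)

type_synonym 'k mpoly = "(nat \<Rightarrow>\<^sub>0 nat) \<Rightarrow>\<^sub>0 'k"

definition Var :: "nat \<Rightarrow> 'k::comm_ring_1 mpoly" where
  "Var v = Poly_Mapping.single (Poly_Mapping.single v 1) 1"

definition Const :: "'k::comm_ring_1 \<Rightarrow> 'k mpoly" where
  "Const c = Poly_Mapping.single 0 c"

definition vars :: "'k::comm_ring_1 mpoly \<Rightarrow> nat set" where
  "vars p = \<Union> (Poly_Mapping.keys ` Poly_Mapping.keys p)"

definition subst :: "'k::comm_ring_1 mpoly \<Rightarrow> (nat \<Rightarrow> 'k mpoly) \<Rightarrow> 'k mpoly" where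
  "subst p \<sigma> = (\<Sum>m\<in>Poly_Mapping.keys p.
       Const (Poly_Mapping.lookup p m) * (\<Prod>v\<in>Poly_Mapping.keys m. \<sigma> v ^ Poly_Mapping.lookup m v))"

definition in_ideal :: "'k::comm_ring_1 mpoly set \<Rightarrow> 'k mpoly \<Rightarrow> bool" where
  "in_ideal G p \<longleftrightarrow> (\<exists>c. p = (\<Sum>g\<in>G. c g * g))"

(* Isomorphism of affine varieties = K-algebra isomorphism of coordinate rings
  K[x_v : v \<in> V]/(G) and K[x_w : w \<in> W]/(H): mutually inverse (modulo the ideals)
  polynomial maps sending ideal to ideal.*)
definition variety_iso :: "nat set \<Rightarrow> 'k::comm_ring_1 mpoly set \<Rightarrow> nat set \<Rightarrow> 'k mpoly set \<Rightarrow> bool" where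
  "variety_iso V G W H \<longleftrightarrow>
     (\<exists>\<phi> \<psi>. (\<forall>v\<in>V. vars (\<phi> v) \<subseteq> W) \<and> (\<forall>w\<in>W. vars (\<psi> w) \<subseteq> V)
        \<and> (\<forall>g\<in>G. in_ideal H (subst g \<phi>)) \<and> (\<forall>h\<in>H. in_ideal G (subst h \<psi>))
        \<and> (\<forall>v\<in>V. in_ideal G (subst (\<phi> v) \<psi> - Var v))
        \<and> (\<forall>w\<in>W. in_ideal H (subst (\<psi> w) \<phi> - Var w)))"

(* X_{A_n}(\<alpha>): variables x_i = Var i and x'_i = Var (n+i) for 1 \<le> i \<le> n;
  equations x_i x'_i = 1 + \<alpha>_i x_{i-1} x_{i+1}, where missing neighbours
  (x_0, x_{n+1}) are replaced by 1.*)
definition nbr :: "nat \<Rightarrow> nat \<Rightarrow> 'k::comm_ring_1 mpoly" where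
  "nbr n i = (if 1 < i then Var (i - 1) else 1) * (if i < n then Var (i + 1) else 1)"

definition XA_vars :: "nat \<Rightarrow> nat set" where
  "XA_vars n = {1..2*n}"

definition XA_eqs :: "nat \<Rightarrow> (nat \<Rightarrow> 'k::comm_ring_1) \<Rightarrow> 'k mpoly set" where
  "XA_eqs n \<alpha> = (\<lambda>i. Var i * Var (n + i) - 1 - Const (\<alpha> i) * nbr n i) ` {1..n}"

definition XA_iso :: "nat \<Rightarrow> (nat \<Rightarrow> 'k::comm_ring_1) \<Rightarrow> (nat \<Rightarrow> 'k) \<Rightarrow> bool" where
  "XA_iso n \<alpha> \<beta> = variety_iso (XA_vars n) (XA_eqs n \<alpha>) (XA_vars n) (XA_eqs n \<beta>)"

end

theory Submission
  imports Defs
begin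

text \<open>A diagonal change of coordinates \<open>x\<^sub>j \<mapsto> c\<^sub>j x\<^sub>j\<close>, \<open>x'\<^sub>j \<mapsto> x'\<^sub>j / c\<^sub>j\<close> keeps every product
  \<open>x\<^sub>i x'\<^sub>i\<close> and turns \<open>\<alpha>\<^sub>i\<close> into \<open>\<alpha>\<^sub>i c\<^sub>i\<^sub>-\<^sub>1 c\<^sub>i\<^sub>+\<^sub>1\<close> (with \<open>c\<^sub>0 = c\<^sub>n\<^sub>+\<^sub>1 = 1\<close>).
  So it suffices to solve \<open>\<alpha>\<^sub>i c\<^sub>i\<^sub>-\<^sub>1 c\<^sub>i\<^sub>+\<^sub>1 = 1\<close>. These equations split into two chains by the
  parity of the indices of the \<open>c\<close>'s, and each chain is solved recursively from whichever end is
  pinned to \<open>1\<close>. For even \<open>n\<close> both chains close up; for odd \<open>n\<close> the equation \<open>i = 1\<close> is left over,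
  and the remaining coefficient \<open>\<alpha>\<^sub>1 c\<^sub>2\<close> only involves \<open>\<alpha>\<^sub>3, \<alpha>\<^sub>5, \<dots>, \<alpha>\<^sub>n\<close>.\<close>

lemma Const_0 [simp]: "Const 0 = 0"
  by (simp add: Const_def)

lemma Const_1 [simp]: "Const 1 = 1"
  by (simp add: Const_def)

lemma Const_diff: "Const (a - b) = Const a - Const b"
  by (simp add: Const_def single_diff)

lemma Const_mult: "Const (a * b) = Const a * Const b"
  by (simp add: Const_def mult_single)

definition monom_subst :: "(nat \<Rightarrow> 'k::comm_ring_1 mpoly) \<Rightarrow> (nat \<Rightarrow>\<^sub>0 nat) \<Rightarrow> 'k mpoly" where
  "monom_subst \<sigma> m = (\<Prod>v\<in>Poly_Mapping.keys m. \<sigma> v ^ Poly_Mapping.lookup m v)"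

lemma monom_subst_superset:
  assumes "finite S" "Poly_Mapping.keys m \<subseteq> S"
  shows "monom_subst \<sigma> m = (\<Prod>v\<in>S. \<sigma> v ^ Poly_Mapping.lookup m v)"
  unfolding monom_subst_def
  by (rule prod.mono_neutral_left[OF assms]) (auto simp: in_keys_iff)

lemma monom_subst_add: "monom_subst \<sigma> (m1 + m2) = monom_subst \<sigma> m1 * monom_subst \<sigma> m2"
proof -
  let ?S = "Poly_Mapping.keys m1 \<union> Poly_Mapping.keys m2"
  have fin: "finite ?S" by simp
  have "monom_subst \<sigma> (m1 + m2) = (\<Prod>v\<in>?S. \<sigma> v ^ Poly_Mapping.lookup (m1 + m2) v)"
    using monom_subst_superset[OF fin keys_add] .
  also have "\<dots> = (\<Prod>v\<in>?S. \<sigma> v ^ Poly_Mapping.lookup m1 v * \<sigma> v ^ Poly_Mapping.lookup m2 v)"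
    by (simp add: lookup_add power_add)
  also have "\<dots> = monom_subst \<sigma> m1 * monom_subst \<sigma> m2"
    by (simp add: prod.distrib monom_subst_superset[OF fin])
  finally show ?thesis .
qed

lemma monom_subst_zero [simp]: "monom_subst \<sigma> 0 = 1"
  by (simp add: monom_subst_def)

lemma monom_subst_single [simp]: "monom_subst \<sigma> (Poly_Mapping.single v (Suc 0)) = \<sigma> v"
  by (simp add: monom_subst_def)

lemma subst_superset:
  assumes "finite S" "Poly_Mapping.keys p \<subseteq> S"
  shows "subst p \<sigma> = (\<Sum>m\<in>S. Const (Poly_Mapping.lookup p m) * monom_subst \<sigma> m)"
  unfolding subst_def monom_subst_def
  by (rule sum.mono_neutral_left[OF assms]) (auto simp: in_keys_iff)

lemma subst_diff: "subst (p - q) \<sigma> = subst p \<sigma> - subst q \<sigma>"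
proof -
  have fin: "finite (Poly_Mapping.keys p \<union> Poly_Mapping.keys q)" by simp
  show ?thesis
    by (simp add: subst_superset[OF fin keys_diff] subst_superset[OF fin] lookup_minus Const_diff
        left_diff_distrib sum_subtractf)
qed

lemma subst_single: "subst (Poly_Mapping.single m a) \<sigma> = Const a * monom_subst \<sigma> m"
  by (simp add: subst_superset[of "{m}"] Const_def)

lemma subst_1: "subst 1 \<sigma> = 1"
  using subst_single[of 0 1 \<sigma>] by simp

lemma Var_mult_Var:
  "Var a * Var b = Poly_Mapping.single (Poly_Mapping.single a 1 + Poly_Mapping.single b 1) 1"
  by (simp add: Var_def mult_single)

lemma subst_Var_mult_Var: "subst (Var a * Var b) \<sigma> = \<sigma> a * \<sigma> b"
  by (simp add: Var_mult_Var subst_single monom_subst_add)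

lemma Const_mult_Var: "Const c * Var v = Poly_Mapping.single (Poly_Mapping.single v 1) c"
  by (simp add: Const_def Var_def mult_single)

lemma vars_Const_mult_Var: "vars (Const c * Var v) \<subseteq> {v}"
  by (simp add: vars_def Const_mult_Var)

lemma in_ideal_member:
  assumes "finite H" "h \<in> H"
  shows "in_ideal H h"
proof -
  have "(\<Sum>g\<in>H. (if g = h then 1 else 0) * g) = (\<Sum>g\<in>H. if g = h then g else 0)"
    by (rule sum.cong) auto
  also have "\<dots> = h" using assms by simp
  finally show ?thesis
    unfolding in_ideal_def by (intro exI[of _ "\<lambda>g. if g = h then 1 else 0"]) simp
qed

lemma in_ideal_zero: "in_ideal H 0"
  unfolding in_ideal_def by (rule exI[of _ "\<lambda>g. 0"]) simp

definition scale_vars :: "(nat \<Rightarrow> 'k::comm_ring_1) \<Rightarrow> nat \<Rightarrow> 'k mpoly" where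
  "scale_vars c v = Const (c v) * Var v"

definition nbr_factor :: "(nat \<Rightarrow> 'k::comm_ring_1) \<Rightarrow> nat \<Rightarrow> nat \<Rightarrow> 'k" where
  "nbr_factor c n i = (if 1 < i then c (i - 1) else 1) * (if i < n then c (i + 1) else 1)"

lemma subst_Const_mult_single:
  "subst (Const a * Poly_Mapping.single m 1) \<sigma> = Const a * monom_subst \<sigma> m"
  by (simp add: Const_def mult_single subst_single)

lemma nbr_eq_single: "nbr n i = Poly_Mapping.single ((if 1 < i then Poly_Mapping.single (i - 1) 1 else 0)
      + (if i < n then Poly_Mapping.single (i + 1) 1 else 0)) 1"
  by (simp add: nbr_def Var_def mult_single)

lemma subst_scale_vars_Const_mult_nbr:
  "subst (Const a * nbr n i) (scale_vars c) = Const (a * nbr_factor c n i) * nbr n i"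
  unfolding nbr_eq_single subst_Const_mult_single monom_subst_add
  by (simp add: scale_vars_def nbr_factor_def Const_mult mult_single Var_def ac_simps)

lemma subst_scale_vars_XA_equation:
  fixes c :: "nat \<Rightarrow> 'k::field"
  assumes "c i * c (n + i) = 1"
  shows "subst (Var i * Var (n + i) - 1 - Const a * nbr n i) (scale_vars c)
       = Var i * Var (n + i) - 1 - Const (a * nbr_factor c n i) * nbr n i"
proof -
  have "subst (Var i * Var (n + i)) (scale_vars c) = Const (c i * c (n + i)) * (Var i * Var (n + i))"
    by (simp add: subst_Var_mult_Var scale_vars_def Const_mult ac_simps)
  then show ?thesis
    using assms by (simp add: subst_diff subst_1 subst_scale_vars_Const_mult_nbr)
qed

lemma subst_scale_vars_maps_XA_eqs:
  fixes s :: "nat \<Rightarrow> 'k::field"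
  assumes "\<forall>i\<in>{1..n}. s i * s (n + i) = 1"
    and "\<forall>i\<in>{1..n}. \<beta> i = \<alpha> i * nbr_factor s n i"
    and "g \<in> XA_eqs n \<alpha>"
  shows "in_ideal (XA_eqs n \<beta>) (subst g (scale_vars s))"
proof -
  obtain i where i: "i \<in> {1..n}" and g: "g = Var i * Var (n + i) - 1 - Const (\<alpha> i) * nbr n i"
    using assms(3) by (auto simp: XA_eqs_def)
  have "subst g (scale_vars s) = Var i * Var (n + i) - 1 - Const (\<beta> i) * nbr n i"
    unfolding g using assms(1,2) i by (simp add: subst_scale_vars_XA_equation)
  also have "\<dots> \<in> XA_eqs n \<beta>"
    using i by (auto simp: XA_eqs_def)
  finally show ?thesis
    by (rule in_ideal_member[rotated]) (simp add: XA_eqs_def)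
qed

lemma subst_scale_vars_scale_vars:
  "subst (scale_vars s v) (scale_vars t) = Const (s v * t v) * Var v"
  unfolding scale_vars_def Const_mult_Var subst_single
  by (simp add: Const_mult_Var Const_def mult_single)

lemma XA_iso_rescale:
  fixes c :: "nat \<Rightarrow> 'k::field"
  assumes c_nonzero: "\<forall>j\<in>{1..n}. c j \<noteq> 0"
    and \<beta>: "\<forall>i\<in>{1..n}. \<beta> i = \<alpha> i * nbr_factor c n i"
  shows "XA_iso n \<alpha> \<beta>"
proof -
  define s where "s v = (if v \<le> n then c v else inverse (c (v - n)))" for v
  define t where "t v = inverse (s v)" for v
  have s_nonzero: "s v \<noteq> 0" if "v \<in> XA_vars n" for v
    using that c_nonzero by (auto simp: s_def XA_vars_def) (use not_less_eq_eq in force)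
  have s_pair: "\<forall>i\<in>{1..n}. s i * s (n + i) = 1" and t_pair: "\<forall>i\<in>{1..n}. t i * t (n + i) = 1"
    using c_nonzero by (auto simp: s_def t_def)
  have nbr_factor_s: "nbr_factor s n i = nbr_factor c n i" if "i \<in> {1..n}" for i
    using that by (auto simp: nbr_factor_def s_def)
  have nbr_factor_t: "nbr_factor t n i = inverse (nbr_factor c n i)" if "i \<in> {1..n}" for i
    using that by (auto simp: nbr_factor_def t_def s_def inverse_mult_distrib)
  have nbr_factor_nonzero: "nbr_factor c n i \<noteq> 0" if "i \<in> {1..n}" for i
  proof -
    have "1 < i \<Longrightarrow> c (i - 1) \<noteq> 0" "i < n \<Longrightarrow> c (i + 1) \<noteq> 0"
      using that c_nonzero by (simp_all add: Suc_le_eq)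
    then show ?thesis by (simp add: nbr_factor_def)
  qed
  have \<beta>_s: "\<forall>i\<in>{1..n}. \<beta> i = \<alpha> i * nbr_factor s n i"
    using \<beta> nbr_factor_s by simp
  have \<alpha>: "\<forall>i\<in>{1..n}. \<alpha> i = \<beta> i * nbr_factor t n i"
    using \<beta> nbr_factor_nonzero by (simp add: nbr_factor_t)
  show ?thesis
    unfolding XA_iso_def variety_iso_def
  proof (rule exI[of _ "scale_vars s"], rule exI[of _ "scale_vars t"], intro conjI ballI)
    fix v assume "v \<in> XA_vars n"
    then show "vars (scale_vars s v) \<subseteq> XA_vars n"
      using vars_Const_mult_Var[of "s v" v] unfolding scale_vars_def by blast
  next
    fix v assume "v \<in> XA_vars n"
    then show "vars (scale_vars t v) \<subseteq> XA_vars n"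
      using vars_Const_mult_Var[of "t v" v] unfolding scale_vars_def by blast
  next
    fix g assume "g \<in> XA_eqs n \<alpha>"
    then show "in_ideal (XA_eqs n \<beta>) (subst g (scale_vars s))"
      by (rule subst_scale_vars_maps_XA_eqs[OF s_pair \<beta>_s])
  next
    fix g assume "g \<in> XA_eqs n \<beta>"
    then show "in_ideal (XA_eqs n \<alpha>) (subst g (scale_vars t))"
      by (rule subst_scale_vars_maps_XA_eqs[OF t_pair \<alpha>])
  next
    fix v assume "v \<in> XA_vars n"
    then show "in_ideal (XA_eqs n \<alpha>) (subst (scale_vars s v) (scale_vars t) - Var v)"
      using s_nonzero by (simp add: subst_scale_vars_scale_vars t_def in_ideal_zero)
  next
    fix v assume "v \<in> XA_vars n"
    then show "in_ideal (XA_eqs n \<beta>) (subst (scale_vars t v) (scale_vars s) - Var v)"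
      using s_nonzero by (simp add: subst_scale_vars_scale_vars t_def in_ideal_zero)
  qed
qed

fun recip_chain :: "(nat \<Rightarrow> 'k::field) \<Rightarrow> nat \<Rightarrow> 'k" where
  "recip_chain a 0 = 1"
| "recip_chain a (Suc 0) = 1"
| "recip_chain a (Suc (Suc k)) = inverse (a (Suc k) * recip_chain a k)"

lemma recip_chain_nonzero:
  "(\<And>i. 0 < i \<Longrightarrow> i < k \<Longrightarrow> a i \<noteq> 0) \<Longrightarrow> recip_chain a k \<noteq> 0"
  by (induction a k rule: recip_chain.induct) auto

lemma recip_chain_step:
  assumes "\<And>i. 0 < i \<Longrightarrow> i \<le> Suc k \<Longrightarrow> a i \<noteq> 0"
  shows "a (Suc k) * recip_chain a k * recip_chain a (Suc (Suc k)) = 1"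
proof -
  have "a (Suc k) \<noteq> 0"
    using assms by simp
  moreover have "recip_chain a k \<noteq> 0"
    by (rule recip_chain_nonzero) (simp add: assms)
  ultimately show ?thesis
    by (simp add: field_simps)
qed

lemma recip_chain_cong:
  "(\<And>i. i < k \<Longrightarrow> odd (k - i) \<Longrightarrow> a i = b i) \<Longrightarrow> recip_chain a k = recip_chain b k"
proof (induction a k rule: recip_chain.induct)
  case (3 a k)
  then show ?case
    by (simp add: Suc_diff_le less_Suc_eq)
qed simp_all

text \<open>Each chain is run from the end at which it is pinned to \<open>1\<close>: upwards from \<open>c\<^sub>0\<close>, or
  downwards from \<open>c\<^sub>n\<^sub>+\<^sub>1\<close> along the mirrored coefficients.\<close>

definition balancing_scale :: "(nat \<Rightarrow> 'k::field) \<Rightarrow> nat \<Rightarrow> nat \<Rightarrow> 'k" where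
  "balancing_scale \<alpha> n j =
     (if odd (n + j) then recip_chain (\<lambda>i. \<alpha> (n + 1 - i)) (n + 1 - j) else recip_chain \<alpha> j)"

lemma balancing_scale_top: "balancing_scale \<alpha> n (Suc n) = 1"
  by (simp add: balancing_scale_def)

lemma balancing_scale_zero: "even n \<Longrightarrow> balancing_scale \<alpha> n 0 = 1"
  by (simp add: balancing_scale_def)

lemma mirror_nonzero:
  fixes i n :: nat
  assumes "\<forall>i\<in>{1..n}. \<alpha> i \<noteq> 0" "0 < i" "i \<le> n"
  shows "\<alpha> (n + 1 - i) \<noteq> 0"
proof -
  have "n + 1 - i \<in> {1..n}"
    using assms(2,3) by auto
  then show ?thesis
    using assms(1) by blast
qed

lemma balancing_scale_nonzero:
  assumes "\<forall>i\<in>{1..n}. \<alpha> i \<noteq> 0" and "j \<in> {1..Suc n}"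
  shows "balancing_scale \<alpha> n j \<noteq> 0"
proof (cases "odd (n + j)")
  case True
  have "recip_chain (\<lambda>i. \<alpha> (n + 1 - i)) (n + 1 - j) \<noteq> 0"
    by (rule recip_chain_nonzero, rule mirror_nonzero[OF assms(1)]) (use assms(2) in auto)
  with True show ?thesis
    by (simp add: balancing_scale_def)
next
  case False
  then have "j \<le> n"
    using assms(2) by (cases "j = Suc n") auto
  then have "recip_chain \<alpha> j \<noteq> 0"
    using assms(1) by (intro recip_chain_nonzero) auto
  with False show ?thesis
    by (simp add: balancing_scale_def)
qed

lemma balancing_scale_balances:
  assumes "\<forall>i\<in>{1..n}. \<alpha> i \<noteq> 0" and "i \<in> {1..n}" and "1 < i \<or> even n"
  shows "\<alpha> i * balancing_scale \<alpha> n (i - 1) * balancing_scale \<alpha> n (i + 1) = 1"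
proof (cases "odd (n + i)")
  case True
  then have "balancing_scale \<alpha> n (i - 1) = recip_chain \<alpha> (i - 1)"
    "balancing_scale \<alpha> n (i + 1) = recip_chain \<alpha> (Suc (Suc (i - 1)))"
    using assms(2) by (auto simp: balancing_scale_def)
  moreover have "\<alpha> (Suc (i - 1)) * recip_chain \<alpha> (i - 1) * recip_chain \<alpha> (Suc (Suc (i - 1))) = 1"
    using assms(1,2) by (intro recip_chain_step) auto
  ultimately show ?thesis
    using assms(2) by simp
next
  case False
  have "i \<noteq> 1"
    using False assms(3) by auto
  with False have "balancing_scale \<alpha> n (i - 1) = recip_chain (\<lambda>j. \<alpha> (n + 1 - j)) (Suc (Suc (n - i)))"
    "balancing_scale \<alpha> n (i + 1) = recip_chain (\<lambda>j. \<alpha> (n + 1 - j)) (n - i)"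
    using assms(2) by (auto simp: balancing_scale_def Suc_diff_le)
  moreover have "\<alpha> (n + 1 - Suc (n - i)) * recip_chain (\<lambda>j. \<alpha> (n + 1 - j)) (n - i)
      * recip_chain (\<lambda>j. \<alpha> (n + 1 - j)) (Suc (Suc (n - i))) = 1"
    using assms(1,2) by (intro recip_chain_step mirror_nonzero) auto
  ultimately show ?thesis
    using assms(2) by (simp add: ac_simps)
qed

lemma balancing_scale_2_cong:
  assumes "odd n" and "\<forall>i\<in>{1..n}. odd i \<longrightarrow> \<alpha> i = \<alpha>' i"
  shows "balancing_scale \<alpha> n 2 = balancing_scale \<alpha>' n 2"
proof -
  have scale_2: "balancing_scale \<beta> n 2 = recip_chain (\<lambda>i. \<beta> (n + 1 - i)) (n - 1)" for \<beta>
    using assms(1) by (simp add: balancing_scale_def)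
  have "recip_chain (\<lambda>i. \<alpha> (n + 1 - i)) (n - 1) = recip_chain (\<lambda>i. \<alpha>' (n + 1 - i)) (n - 1)"
  proof (rule recip_chain_cong)
    fix i assume "i < n - 1" "odd (n - 1 - i)"
    then have "n + 1 - i \<in> {1..n}" "odd (n + 1 - i)"
      using assms(1) by auto presburger
    then show "\<alpha> (n + 1 - i) = \<alpha>' (n + 1 - i)"
      using assms(2) by blast
  qed
  then show ?thesis
    by (simp only: scale_2)
qed

lemma nbr_factor_eq:
  assumes "c (Suc n) = 1" and "i \<in> {1..n}"
  shows "nbr_factor c n i = (if i = 1 then 1 else c (i - 1)) * c (i + 1)"
  using assms by (auto simp: nbr_factor_def)

lemma balancing_scale_rescales:
  assumes "\<forall>i\<in>{1..n}. \<alpha> i \<noteq> 0" and "i \<in> {1..n}"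
  shows "\<alpha> i * nbr_factor (balancing_scale \<alpha> n) n i
       = (if i = 1 \<and> odd n then \<alpha> 1 * balancing_scale \<alpha> n 2 else 1)"
proof (cases "i = 1 \<and> odd n")
  case True
  then show ?thesis
    using assms(2) by (simp add: nbr_factor_eq balancing_scale_top numeral_2_eq_2)
next
  case False
  then have "nbr_factor (balancing_scale \<alpha> n) n i
      = balancing_scale \<alpha> n (i - 1) * balancing_scale \<alpha> n (i + 1)"
    using assms(2) by (auto simp: nbr_factor_eq balancing_scale_top balancing_scale_zero)
  moreover have "1 < i \<or> even n"
    using False assms(2) by auto
  ultimately show ?thesis
    unfolding if_not_P[OF False] using balancing_scale_balances[OF assms] by (simp add: mult.assoc)
qed

theorem mainTheorem5:
  fixes n :: nat
  assumes "n \<ge> 1"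
  shows "(even n \<longrightarrow> (\<forall>\<alpha> :: nat \<Rightarrow> 'k::field. (\<forall>i\<in>{1..n}. \<alpha> i \<noteq> 0) \<longrightarrow>
            XA_iso n \<alpha> (\<lambda>_. 1)))
       \<and> (odd n \<longrightarrow> (\<exists>F :: (nat \<Rightarrow> 'k) \<Rightarrow> 'k. \<forall>\<alpha>. (\<forall>i\<in>{1..n}. \<alpha> i \<noteq> 0) \<longrightarrow>
            (let a = F (\<lambda>i. if i \<in> {1..n} \<and> odd i then \<alpha> i else 0)
             in a \<noteq> 0 \<and> XA_iso n \<alpha> (\<lambda>i. if i = 1 then a else 1))))"
proof (intro conjI impI allI)
  fix \<alpha> :: "nat \<Rightarrow> 'k"
  assume "even n" and "\<forall>i\<in>{1..n}. \<alpha> i \<noteq> 0"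
  then show "XA_iso n \<alpha> (\<lambda>_. 1)"
    by (intro XA_iso_rescale[of _ "balancing_scale \<alpha> n"])
       (simp_all add: balancing_scale_nonzero balancing_scale_rescales)
next
  assume "odd n"
  define F where "F a = a 1 * balancing_scale a n 2" for a :: "nat \<Rightarrow> 'k"
  show "\<exists>F :: (nat \<Rightarrow> 'k) \<Rightarrow> 'k. \<forall>\<alpha>. (\<forall>i\<in>{1..n}. \<alpha> i \<noteq> 0) \<longrightarrow>
      (let a = F (\<lambda>i. if i \<in> {1..n} \<and> odd i then \<alpha> i else 0)
       in a \<noteq> 0 \<and> XA_iso n \<alpha> (\<lambda>i. if i = 1 then a else 1))"
  proof (intro exI[of _ F] allI impI)
    fix \<alpha> :: "nat \<Rightarrow> 'k"
    assume \<alpha>_nonzero: "\<forall>i\<in>{1..n}. \<alpha> i \<noteq> 0"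
    let ?\<alpha>_odd = "\<lambda>i. if i \<in> {1..n} \<and> odd i then \<alpha> i else 0"
    have "balancing_scale ?\<alpha>_odd n 2 = balancing_scale \<alpha> n 2"
      by (rule balancing_scale_2_cong[OF \<open>odd n\<close>]) simp
    then have F_odd_part: "F ?\<alpha>_odd = F \<alpha>"
      using assms by (simp add: F_def)
    have "F \<alpha> \<noteq> 0"
      using assms \<alpha>_nonzero by (simp add: F_def balancing_scale_nonzero)
    moreover have "XA_iso n \<alpha> (\<lambda>i. if i = 1 then F \<alpha> else 1)"
      using \<alpha>_nonzero \<open>odd n\<close>
      by (intro XA_iso_rescale[of _ "balancing_scale \<alpha> n"])
         (simp_all add: F_def balancing_scale_nonzero balancing_scale_rescales)
    ultimately show "let a = F (\<lambda>i. if i \<in> {1..n} \<and> odd i then \<alpha> i else 0)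
        in a \<noteq> 0 \<and> XA_iso n \<alpha> (\<lambda>i. if i = 1 then a else 1)"
      unfolding Let_def F_odd_part by blast
  qed
qed

end
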